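(* Let $M$ be a $po$-$\Gamma$-semigroup. Then $M$ is completely regular if and only if for every $a\in M$ there exist $x\in M$ and $\gamma,\mu,\rho,\xi\in\Gamma$ such that $$a\le (a\gamma a)\mu x\rho (a\xi a).$$
   Context: A $po$-$\Gamma$-semigroup is a triple $(M,\Gamma,\le)$ where $M,\Gamma$ are nonempty sets with a map $M\times\Gamma\times M\to M$, $(a,\gamma,b)\mapsto a\gamma b$, satisfying $(a\gamma b)\mu c=a\gamma(b\mu c)$ for all $a,b,c\in M$, $\gamma,\mu\in\Gamma$, and $\le$ is a partial order on $M$ such that $a\le b$ implies $a\gamma c\le b\gamma c$ and $c\gamma a\le c\gamma b$ for all $c\in M$, $\gamma\in\Gamma$. For $A,B\subseteq M$, $A\Gamma B=\{a\gamma b: a\in A,\gamma\in\Gamma,b\in B\}$ (with $a\Gamma B$ meaning $\{a\}\Gamma B$, etc.), and $(A]=\{t\in M: t\le a \text{ for some } a\in A\}$. $M$ is regular if $a\in(a\Gamma M\Gamma a]$ for all $a\in M$; left regular if $a\in(M\Gamma a\Gamma a]$ for all $a\in M$; right regular if $a\in(a\Gamma a\Gamma M]$ for all $a\in M$; completely regular if it is regular, left regular and right regular. *)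

theory Defs
  imports Main
begin

definition po_gamma_semigroup ::
  "'a set \<Rightarrow> 'g set \<Rightarrow> ('a \<Rightarrow> 'g \<Rightarrow> 'a \<Rightarrow> 'a) \<Rightarrow> ('a \<Rightarrow> 'a \<Rightarrow> bool) \<Rightarrow> bool" where
  "po_gamma_semigroup M G op le \<longleftrightarrow>
     M \<noteq> {} \<and> G \<noteq> {} \<and>
     (\<forall>a\<in>M. \<forall>g\<in>G. \<forall>b\<in>M. op a g b \<in> M) \<and>
     (\<forall>a\<in>M. \<forall>b\<in>M. \<forall>c\<in>M. \<forall>g\<in>G. \<forall>m\<in>G. op (op a g b) m c = op a g (op b m c)) \<and>
     (\<forall>a\<in>M. le a a) \<and>
     (\<forall>a\<in>M. \<forall>b\<in>M. le a b \<and> le b a \<longrightarrow> a = b) \<and>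
     (\<forall>a\<in>M. \<forall>b\<in>M. \<forall>c\<in>M. le a b \<and> le b c \<longrightarrow> le a c) \<and>
     (\<forall>a\<in>M. \<forall>b\<in>M. le a b \<longrightarrow>
        (\<forall>c\<in>M. \<forall>g\<in>G. le (op a g c) (op b g c) \<and> le (op c g a) (op c g b)))"

definition down :: "'a set \<Rightarrow> ('a \<Rightarrow> 'a \<Rightarrow> bool) \<Rightarrow> 'a set \<Rightarrow> 'a set" where
  "down M le A = {t \<in> M. \<exists>a\<in>A. le t a}"

definition gprod :: "'g set \<Rightarrow> ('a \<Rightarrow> 'g \<Rightarrow> 'a \<Rightarrow> 'a) \<Rightarrow> 'a set \<Rightarrow> 'a set \<Rightarrow> 'a set" where
  "gprod G op A B = {op a g b | a g b. a \<in> A \<and> g \<in> G \<and> b \<in> B}"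

definition gregular where
  "gregular M G op le \<longleftrightarrow>
     (\<forall>a\<in>M. a \<in> down M le (gprod G op (gprod G op {a} M) {a}))"

definition left_gregular where
  "left_gregular M G op le \<longleftrightarrow>
     (\<forall>a\<in>M. a \<in> down M le (gprod G op (gprod G op M {a}) {a}))"

definition right_gregular where
  "right_gregular M G op le \<longleftrightarrow>
     (\<forall>a\<in>M. a \<in> down M le (gprod G op (gprod G op {a} {a}) M))"

definition completely_gregular where
  "completely_gregular M G op le \<longleftrightarrow>
     gregular M G op le \<and> left_gregular M G op le \<and> right_gregular M G op le"

end

theory Submission
  imports Defs
begin

text \<open>If \<open>a \<le> (a\<gamma>\<^sub>1t)\<kappa>\<^sub>1a\<close>, \<open>a \<le> (y\<gamma>\<^sub>2a)\<kappa>\<^sub>2a\<close> and \<open>a \<le> (a\<gamma>\<^sub>3a)\<kappa>\<^sub>3z\<close> (regularity, left and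
  right regularity), substitute the right regular bound for the first and the left regular bound
  for the last \<open>a\<close> in the regular bound: by monotonicity and associativity
  \<open>a \<le> (a\<gamma>\<^sub>3a)\<kappa>\<^sub>3(z\<gamma>\<^sub>1t\<kappa>\<^sub>1y)\<gamma>\<^sub>2(a\<kappa>\<^sub>2a)\<close>. Conversely, such a bound reassociates into an
  element of each of \<open>a\<Gamma>M\<Gamma>a\<close>, \<open>M\<Gamma>a\<Gamma>a\<close> and \<open>a\<Gamma>a\<Gamma>M\<close>.\<close>

lemma bex_gprod_iff: "(\<exists>c\<in>gprod G op A B. P c) \<longleftrightarrow> (\<exists>a\<in>A. \<exists>g\<in>G. \<exists>b\<in>B. P (op a g b))"
  unfolding gprod_def by blast

lemma mem_down_iff: "a \<in> down M le A \<longleftrightarrow> a \<in> M \<and> (\<exists>b\<in>A. le a b)"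
  by (simp add: down_def)

lemma gregular_iff:
  "gregular M G op le \<longleftrightarrow> (\<forall>a\<in>M. \<exists>g\<in>G. \<exists>x\<in>M. \<exists>m\<in>G. le a (op (op a g x) m a))"
  unfolding gregular_def mem_down_iff bex_gprod_iff by simp

lemma left_gregular_iff:
  "left_gregular M G op le \<longleftrightarrow> (\<forall>a\<in>M. \<exists>y\<in>M. \<exists>g\<in>G. \<exists>m\<in>G. le a (op (op y g a) m a))"
  unfolding left_gregular_def mem_down_iff bex_gprod_iff by simp

lemma right_gregular_iff:
  "right_gregular M G op le \<longleftrightarrow> (\<forall>a\<in>M. \<exists>g\<in>G. \<exists>m\<in>G. \<exists>z\<in>M. le a (op (op a g a) m z))"
  unfolding right_gregular_def mem_down_iff bex_gprod_iff by simp

locale po_gamma =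
  fixes M :: "'a set" and G :: "'g set"
    and op :: "'a \<Rightarrow> 'g \<Rightarrow> 'a \<Rightarrow> 'a" and le :: "'a \<Rightarrow> 'a \<Rightarrow> bool"
  assumes op_closed [simp]: "a \<in> M \<Longrightarrow> g \<in> G \<Longrightarrow> b \<in> M \<Longrightarrow> op a g b \<in> M"
    and op_assoc: "a \<in> M \<Longrightarrow> b \<in> M \<Longrightarrow> c \<in> M \<Longrightarrow> g \<in> G \<Longrightarrow> m \<in> G \<Longrightarrow>
      op (op a g b) m c = op a g (op b m c)"
    and ord_trans: "le a b \<Longrightarrow> le b c \<Longrightarrow> a \<in> M \<Longrightarrow> b \<in> M \<Longrightarrow> c \<in> M \<Longrightarrow> le a c"
    and op_mono_left: "a \<in> M \<Longrightarrow> b \<in> M \<Longrightarrow> c \<in> M \<Longrightarrow> g \<in> G \<Longrightarrow> le a b \<Longrightarrow> le (op a g c) (op b g c)"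
    and op_mono_right: "a \<in> M \<Longrightarrow> b \<in> M \<Longrightarrow> c \<in> M \<Longrightarrow> g \<in> G \<Longrightarrow> le a b \<Longrightarrow> le (op c g a) (op c g b)"
begin

lemma le_completely_regular_bound:
  assumes a: "a \<in> M" and t: "t \<in> M" "g\<^sub>1 \<in> G" "k\<^sub>1 \<in> G" and y: "y \<in> M" "g\<^sub>2 \<in> G" "k\<^sub>2 \<in> G"
    and z: "z \<in> M" "g\<^sub>3 \<in> G" "k\<^sub>3 \<in> G"
    and regular: "le a (op (op a g\<^sub>1 t) k\<^sub>1 a)"
    and left: "le a (op (op y g\<^sub>2 a) k\<^sub>2 a)"
    and right: "le a (op (op a g\<^sub>3 a) k\<^sub>3 z)"
  shows "le a (op (op (op a g\<^sub>3 a) k\<^sub>3 (op (op z g\<^sub>1 t) k\<^sub>1 y)) g\<^sub>2 (op a k\<^sub>2 a))"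
proof -
  let ?l = "op (op y g\<^sub>2 a) k\<^sub>2 a" and ?r = "op (op a g\<^sub>3 a) k\<^sub>3 z"
  have "le (op (op a g\<^sub>1 t) k\<^sub>1 a) (op (op a g\<^sub>1 t) k\<^sub>1 ?l)"
    using a t y left by (intro op_mono_right) simp_all
  with regular have "le a (op (op a g\<^sub>1 t) k\<^sub>1 ?l)"
    by (rule ord_trans) (use a t y in simp_all)
  moreover have "le (op (op a g\<^sub>1 t) k\<^sub>1 ?l) (op (op ?r g\<^sub>1 t) k\<^sub>1 ?l)"
    using a t y z right by (intro op_mono_left) simp_all
  ultimately have "le a (op (op ?r g\<^sub>1 t) k\<^sub>1 ?l)"
    by (rule ord_trans) (use a t y z in simp_all)
  also have "op (op ?r g\<^sub>1 t) k\<^sub>1 ?l = op (op (op a g\<^sub>3 a) k\<^sub>3 (op (op z g\<^sub>1 t) k\<^sub>1 y)) g\<^sub>2 (op a k\<^sub>2 a)"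
    using a t y z by (simp add: op_assoc)
  finally show ?thesis .
qed

lemma completely_regular_at_iff:
  assumes a: "a \<in> M"
  shows "(\<exists>g\<in>G. \<exists>x\<in>M. \<exists>m\<in>G. le a (op (op a g x) m a)) \<and>
      (\<exists>y\<in>M. \<exists>g\<in>G. \<exists>m\<in>G. le a (op (op y g a) m a)) \<and>
      (\<exists>g\<in>G. \<exists>m\<in>G. \<exists>z\<in>M. le a (op (op a g a) m z))
    \<longleftrightarrow> (\<exists>x\<in>M. \<exists>g\<in>G. \<exists>m\<in>G. \<exists>r\<in>G. \<exists>k\<in>G. le a (op (op (op a g a) m x) r (op a k a)))"
    (is "?regular \<and> ?left \<and> ?right \<longleftrightarrow> ?bound")
proof
  assume "?regular \<and> ?left \<and> ?right"
  then obtain g\<^sub>1 t k\<^sub>1 y g\<^sub>2 k\<^sub>2 g\<^sub>3 k\<^sub>3 z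
    where t: "g\<^sub>1 \<in> G" "t \<in> M" "k\<^sub>1 \<in> G" "le a (op (op a g\<^sub>1 t) k\<^sub>1 a)"
      and y: "y \<in> M" "g\<^sub>2 \<in> G" "k\<^sub>2 \<in> G" "le a (op (op y g\<^sub>2 a) k\<^sub>2 a)"
      and z: "g\<^sub>3 \<in> G" "k\<^sub>3 \<in> G" "z \<in> M" "le a (op (op a g\<^sub>3 a) k\<^sub>3 z)"
    by blast
  show ?bound
  proof (intro bexI)
    show "le a (op (op (op a g\<^sub>3 a) k\<^sub>3 (op (op z g\<^sub>1 t) k\<^sub>1 y)) g\<^sub>2 (op a k\<^sub>2 a))"
      using a t y z by (intro le_completely_regular_bound)
  qed (use t y z in simp_all)
next
  assume ?bound
  then obtain x g m r k where x: "x \<in> M" "g \<in> G" "m \<in> G" "r \<in> G" "k \<in> G"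
    and bound: "le a (op (op (op a g a) m x) r (op a k a))"
    by blast
  have "le a (op (op a g (op (op a m x) r a)) k a)"
    and "le a (op (op (op (op a g a) m x) r a) k a)"
    and "le a (op (op a g a) m (op (op x r a) k a))"
    using bound a x by (simp_all add: op_assoc)
  moreover have "op (op a m x) r a \<in> M" "op (op a g a) m x \<in> M" "op (op x r a) k a \<in> M"
    using a x by simp_all
  ultimately show "?regular \<and> ?left \<and> ?right"
    using x by (intro conjI bexI) assumption+
qed

end

theorem proposition3:
  fixes M :: "'a set" and G :: "'g set"
    and op :: "'a \<Rightarrow> 'g \<Rightarrow> 'a \<Rightarrow> 'a" and le :: "'a \<Rightarrow> 'a \<Rightarrow> bool"
  assumes "po_gamma_semigroup M G op le"
  shows "completely_gregular M G op le \<longleftrightarrow>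
    (\<forall>a\<in>M. \<exists>x\<in>M. \<exists>g\<in>G. \<exists>m\<in>G. \<exists>r\<in>G. \<exists>k\<in>G.
       le a (op (op (op a g a) m x) r (op a k a)))"
proof -
  interpret po_gamma M G op le
    using assms unfolding po_gamma_semigroup_def by unfold_locales meson+
  show ?thesis
    unfolding completely_gregular_def gregular_iff left_gregular_iff right_gregular_iff
      ball_conj_distrib [symmetric]
    by (intro ball_cong refl) (rule completely_regular_at_iff)
qed

end
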